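(* Let $K\ge 2$ be an even integer, let $M\ge K/2$ be an integer, and let $\tau>0$ and $p_{\max}>0$. Let $\beta_1,\ldots,\beta_K>0$ satisfy $\beta_j>\beta_i$ for all $j\in\mathcal{K}_c=\{1,\ldots,K/2\}$ and all $i\in\mathcal{K}_e=\{K/2+1,\ldots,K\}$. Set $\bar M=M+1-K/2$. For a power vector $\mathbf{p}=(p_1,\ldots,p_K)^T$ with $p_k\ge 0$ define $$R_k(\mathbf{p})=\tau\log_2\!\left(1+p_k\beta_k\bar M\right)\ \text{for } k\in\mathcal{K}_c,\qquad R_k(\mathbf{p})=\tau\log_2\!\left(1+\frac{p_k\beta_k}{p_{k-K/2}\beta_k+1}\right)\ \text{for } k\in\mathcal{K}_e.$$ Consider the problem of maximizing $\sum_{k=1}^K R_k(\mathbf{p})$ over $\mathbf{p}\succeq 0$ subject to $\sum_{k=1}^K p_k\le p_{\max}$. Then a feasible $\mathbf{p}$ is a maximizer only if $p_k=0$ for all $k\in\mathcal{K}_e$, and the maximum is attained by a power vector with $p_k=0$ for all $k\in\mathcal{K}_e$; i.e., the sum rate is maximized if and only if $p_k=0$ for all $k\in\mathcal{K}_e$ (together with an optimal allocation among the cell-center users).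
   Context: This models downlink power-domain NOMA with perfect CSI from an $M$-antenna base station to $K$ single-antenna users, split into $K/2$ cell-center users (indices $\mathcal{K}_c$) and $K/2$ cell-edge users (indices $\mathcal{K}_e$); users $k$ and $k+K/2$ form a group sharing a zero-forcing beam. $\beta_k$ is the large-scale fading coefficient of user $k$, $p_k$ its normalized transmit power, $\tau$ the fraction of the coherence interval used for data. The rate expressions above are the (perfect-CSI) rates assigned to cell-center users (after successive interference cancellation) and cell-edge users (treating the in-group cell-center signal as noise). *)

theory Defs
  imports Complex_Main
begin

text \<open>Users are indexed 1..K; cell-center users 1..K/2, cell-edge users K/2+1..K.
  Power vectors are functions nat => real; only indices 1..K matter.\<close>

definition center_users :: "nat \<Rightarrow> nat set" where
  "center_users K = {1..K div 2}"

definition edge_users :: "nat \<Rightarrow> nat set" where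
  "edge_users K = {K div 2 + 1..K}"

definition Mbar :: "nat \<Rightarrow> nat \<Rightarrow> real" where
  "Mbar K M = real M + 1 - real K / 2"

definition rate :: "nat \<Rightarrow> nat \<Rightarrow> real \<Rightarrow> (nat \<Rightarrow> real) \<Rightarrow> (nat \<Rightarrow> real) \<Rightarrow> nat \<Rightarrow> real" where
  "rate K M tau beta p k =
     (if k \<in> center_users K then tau * log 2 (1 + p k * beta k * Mbar K M)
      else tau * log 2 (1 + p k * beta k / (p (k - K div 2) * beta k + 1)))"

definition sum_rate :: "nat \<Rightarrow> nat \<Rightarrow> real \<Rightarrow> (nat \<Rightarrow> real) \<Rightarrow> (nat \<Rightarrow> real) \<Rightarrow> real" where
  "sum_rate K M tau beta p = (\<Sum>k=1..K. rate K M tau beta p k)"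

definition feasible :: "nat \<Rightarrow> real \<Rightarrow> (nat \<Rightarrow> real) \<Rightarrow> bool" where
  "feasible K pmax p \<longleftrightarrow> (\<forall>k\<in>{1..K}. 0 \<le> p k) \<and> (\<Sum>k=1..K. p k) \<le> pmax"

definition is_maximizer :: "nat \<Rightarrow> nat \<Rightarrow> real \<Rightarrow> real \<Rightarrow> (nat \<Rightarrow> real) \<Rightarrow> (nat \<Rightarrow> real) \<Rightarrow> bool" where
  "is_maximizer K M tau pmax beta p \<longleftrightarrow> feasible K pmax p \<and>
     (\<forall>q. feasible K pmax q \<longrightarrow> sum_rate K M tau beta q \<le> sum_rate K M tau beta p)"

end

(*
  Within the group of users j and j + K/2, write x, y for their powers,
  a = beta j * Mbar and b = beta (j + K/2), so that a > b > 0.  The pair's rate is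
  tau * log2 of (1 + x a) (1 + y b / (x b + 1)), which falls short of the factor
  1 + (x + y) a obtained by handing all of the pair's power to the cell-center user
  by exactly y (a - b) / (x b + 1).  Merging the powers keeps the total power, so a
  maximizer cannot leave positive power on any cell-edge user.  A maximizer exists
  because the sum rate is continuous on the compact set of feasible power vectors
  supported on the users 1..K.
*)

theory Submission
  imports Defs "HOL-Analysis.Function_Topology"
begin

lemma merge_factor_gap:
  fixes a b x y :: real
  assumes "x * b + 1 \<noteq> 0"
  shows "1 + (x + y) * a - (1 + x * a) * (1 + y * b / (x * b + 1)) = y * (a - b) / (x * b + 1)"
  using assms by (simp add: field_simps)

lemma log_merge_le:
  fixes a b x y c :: real
  assumes "1 < c" and "0 < b" and "b \<le> a" and "0 \<le> x" and "0 \<le> y"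
  shows "log c (1 + x * a) + log c (1 + y * b / (x * b + 1)) \<le> log c (1 + (x + y) * a)"
proof -
  have pos1: "0 < 1 + x * a" and pos2: "0 < 1 + y * b / (x * b + 1)"
    using assms by (auto intro: add_pos_nonneg)
  have "0 \<le> y * (a - b) / (x * b + 1)"
    using assms by (simp add: add_nonneg_pos)
  then have "(1 + x * a) * (1 + y * b / (x * b + 1)) \<le> 1 + (x + y) * a"
    using merge_factor_gap[of x b y a] assms by (smt (verit) mult_nonneg_nonneg)
  then have "log c ((1 + x * a) * (1 + y * b / (x * b + 1))) \<le> log c (1 + (x + y) * a)"
    using assms(1) pos1 pos2 by (intro log_mono) simp_all
  then show ?thesis
    using pos1 pos2 by (simp add: log_mult)
qed

lemma log_merge_less:
  fixes a b x y c :: real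
  assumes "1 < c" and "0 < b" and "b < a" and "0 \<le> x" and "0 < y"
  shows "log c (1 + x * a) + log c (1 + y * b / (x * b + 1)) < log c (1 + (x + y) * a)"
proof -
  have pos1: "0 < 1 + x * a" and pos2: "0 < 1 + y * b / (x * b + 1)"
    using assms by (auto intro: add_pos_nonneg)
  have "0 < y * (a - b) / (x * b + 1)"
    using assms by (simp add: add_nonneg_pos)
  then have "(1 + x * a) * (1 + y * b / (x * b + 1)) < 1 + (x + y) * a"
    using merge_factor_gap[of x b y a] assms by (smt (verit) mult_nonneg_nonneg)
  then have "log c ((1 + x * a) * (1 + y * b / (x * b + 1))) < log c (1 + (x + y) * a)"
    using assms(1) pos1 pos2 by (intro log_less) simp_all
  then show ?thesis
    using pos1 pos2 by (simp add: log_mult)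
qed

lemma sum_double_interval_pairs:
  fixes f :: "nat \<Rightarrow> 'a::comm_monoid_add"
  shows "(\<Sum>k=1..2*h. f k) = (\<Sum>j=1..h. f j + f (j + h))"
proof -
  have "{1..2*h} = {1..h} \<union> {h+1..h+h}" by auto
  then have "(\<Sum>k=1..2*h. f k) = (\<Sum>k=1..h. f k) + (\<Sum>k=1+h..h+h. f k)"
    by (simp add: sum.union_disjoint ivl_disj_int add.commute)
  also have "(\<Sum>k=1+h..h+h. f k) = (\<Sum>j=1..h. f (j + h))"
    by (rule sum.shift_bounds_cl_nat_ivl)
  finally show ?thesis by (simp add: sum.distrib)
qed

lemma compact_supported_simplex:
  fixes I :: "'a set" and c :: real
  assumes "finite I"
  shows "compact {p. (\<forall>k\<in>I. 0 \<le> p k) \<and> (\<forall>k. k \<notin> I \<longrightarrow> p k = 0) \<and> sum p I \<le> c}"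
    (is "compact ?S")
proof -
  define B where "B = PiE UNIV (\<lambda>k. if k \<in> I then {0..c} else {0})"
  have "compactin (product_topology (\<lambda>_. euclidean) UNIV) B"
    unfolding B_def by (subst compactin_PiE) auto
  then have "compact B"
    by (simp add: euclidean_product_topology)
  moreover have "closed {p. sum p I \<le> c}"
    by (intro closed_Collect_le continuous_on_sum continuous_on_const) simp
  moreover have "?S = B \<inter> {p. sum p I \<le> c}"
  proof -
    have "p k \<le> c" if "p \<in> ?S" "k \<in> I" for p k
      using that assms member_le_sum[of k I p] by auto
    then show ?thesis
      unfolding B_def by (auto simp: PiE_iff split: if_splits)
  qed
  ultimately show ?thesis
    by (simp add: compact_Int_closed)
qed

definition merge_edge_power :: "nat \<Rightarrow> (nat \<Rightarrow> real) \<Rightarrow> nat \<Rightarrow> real" where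
  "merge_edge_power K p k = (if k \<in> center_users K then p k + p (k + K div 2) else 0)"

lemma rate_center:
  "k \<in> center_users K \<Longrightarrow> rate K M tau beta p k = tau * log 2 (1 + p k * beta k * Mbar K M)"
  by (simp add: rate_def)

lemma rate_edge_partner:
  assumes "j \<in> center_users K"
  shows "rate K M tau beta p (j + K div 2)
    = tau * log 2 (1 + p (j + K div 2) * beta (j + K div 2) / (p j * beta (j + K div 2) + 1))"
  using assms by (simp add: rate_def center_users_def)

lemma rate_cong:
  assumes "\<forall>i\<in>{1..K}. p i = q i" and "k \<in> {1..K}"
  shows "rate K M tau beta p k = rate K M tau beta q k"
proof -
  have "k - K div 2 \<in> {1..K}" if "k \<notin> center_users K"
    using that assms(2) by (auto simp: center_users_def)
  then show ?thesis
    using assms by (simp add: rate_def)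
qed

lemma sum_rate_cong:
  "\<forall>i\<in>{1..K}. p i = q i \<Longrightarrow> sum_rate K M tau beta p = sum_rate K M tau beta q"
  unfolding sum_rate_def by (intro sum.cong refl rate_cong)

locale noma_downlink =
  fixes K M :: nat and tau :: real and beta :: "nat \<Rightarrow> real"
  assumes even_K: "even K"
    and M_ge: "K div 2 \<le> M"
    and tau_pos: "tau > 0"
    and beta_pos: "\<forall>k\<in>{1..K}. beta k > 0"
    and beta_center_gt_edge: "\<forall>j\<in>center_users K. \<forall>i\<in>edge_users K. beta j > beta i"
begin

lemma K_eq_double_half: "K = 2 * (K div 2)"
  using even_K by simp

lemma one_le_Mbar: "1 \<le> Mbar K M"
  using M_ge even_K by (auto simp: Mbar_def elim!: evenE)

lemma edge_users_eq: "edge_users K = (\<lambda>j. j + K div 2) ` center_users K"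
  unfolding edge_users_def center_users_def
  by (subst K_eq_double_half) (auto simp: image_iff intro!: bexI[of _ "_ - K div 2"])

lemma sum_rate_pairs:
  "sum_rate K M tau beta p
    = (\<Sum>j\<in>center_users K. rate K M tau beta p j + rate K M tau beta p (j + K div 2))"
  unfolding sum_rate_def center_users_def
  by (subst K_eq_double_half) (rule sum_double_interval_pairs)

lemma continuous_on_rate:
  assumes "k \<in> {1..K}"
  shows "continuous_on {p. \<forall>i\<in>{1..K}. 0 \<le> p i} (\<lambda>p. rate K M tau beta p k)"
proof -
  let ?P = "{p::nat \<Rightarrow> real. \<forall>i\<in>{1..K}. 0 \<le> p i}"
  have coord: "continuous_on ?P (\<lambda>p. p i)" for i
    by (rule continuous_on_subset[OF continuous_on_product_coordinates]) simp
  have bk: "beta k > 0" and pk: "\<forall>p\<in>?P. 0 \<le> p k"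
    using assms beta_pos by auto
  show ?thesis
  proof (cases "k \<in> center_users K")
    case True
    have pos: "\<forall>p\<in>?P. 0 < 1 + p k * beta k * Mbar K M"
      using pk bk one_le_Mbar by (smt (verit) mult_nonneg_nonneg)
    have "continuous_on ?P (\<lambda>p. tau * log 2 (1 + p k * beta k * Mbar K M))"
      by (intro continuous_intros coord) (use pos in auto)
    then show ?thesis
      using True by (simp add: rate_def)
  next
    case False
    then have "k - K div 2 \<in> {1..K}"
      using assms by (auto simp: center_users_def)
    then have "\<forall>p\<in>?P. 0 \<le> p (k - K div 2)"
      by blast
    then have den: "\<forall>p\<in>?P. 0 < p (k - K div 2) * beta k + 1"
      and pos: "\<forall>p\<in>?P. 0 < 1 + p k * beta k / (p (k - K div 2) * beta k + 1)"
      using pk bk by (smt (verit) mult_nonneg_nonneg divide_nonneg_pos)+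
    have "continuous_on ?P (\<lambda>p. tau * log 2 (1 + p k * beta k / (p (k - K div 2) * beta k + 1)))"
      by (intro continuous_intros coord) (use pos den in force)+
    then show ?thesis
      using False by (simp add: rate_def)
  qed
qed

lemma continuous_on_sum_rate:
  "continuous_on {p. \<forall>k\<in>{1..K}. 0 \<le> p k} (sum_rate K M tau beta)"
  unfolding sum_rate_def by (intro continuous_on_sum continuous_on_rate) simp

lemma pair_rate_eq:
  assumes "j \<in> center_users K"
  shows "rate K M tau beta p j + rate K M tau beta p (j + K div 2)
    = tau * (log 2 (1 + p j * (beta j * Mbar K M))
        + log 2 (1 + p (j + K div 2) * beta (j + K div 2) / (p j * beta (j + K div 2) + 1)))"
  using assms by (simp add: rate_center rate_edge_partner mult.assoc distrib_left)

lemma pair_rate_merge_eq: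
  assumes "j \<in> center_users K"
  shows "rate K M tau beta (merge_edge_power K p) j
      + rate K M tau beta (merge_edge_power K p) (j + K div 2)
    = tau * log 2 (1 + (p j + p (j + K div 2)) * (beta j * Mbar K M))"
proof -
  have "j + K div 2 \<notin> center_users K" and "0 < j"
    using assms by (auto simp: center_users_def)
  then show ?thesis
    using assms by (simp add: rate_center rate_edge_partner merge_edge_power_def mult.assoc)
qed

lemma partner_gain_bounds:
  assumes "j \<in> center_users K"
  shows "0 < beta (j + K div 2)" and "beta (j + K div 2) < beta j * Mbar K M"
proof -
  have edge: "j + K div 2 \<in> edge_users K"
    using assms edge_users_eq by blast
  then show pos: "0 < beta (j + K div 2)"
    using beta_pos by (auto simp: edge_users_def)
  have "beta (j + K div 2) < beta j"
    using assms edge beta_center_gt_edge by blast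
  then show "beta (j + K div 2) < beta j * Mbar K M"
    using pos one_le_Mbar by (smt (verit) mult_le_cancel_left1)
qed

lemma pair_rate_merge_le:
  assumes "j \<in> center_users K" and "0 \<le> p j" and "0 \<le> p (j + K div 2)"
  shows "rate K M tau beta p j + rate K M tau beta p (j + K div 2)
    \<le> rate K M tau beta (merge_edge_power K p) j
      + rate K M tau beta (merge_edge_power K p) (j + K div 2)"
proof -
  note gains = partner_gain_bounds[OF assms(1)]
  show ?thesis
    unfolding pair_rate_merge_eq[OF assms(1)] pair_rate_eq[OF assms(1), of p]
    using log_merge_le[of 2, OF _ gains(1) less_imp_le[OF gains(2)] assms(2,3)] tau_pos by simp
qed

lemma pair_rate_merge_less:
  assumes "j \<in> center_users K" and "0 \<le> p j" and "0 < p (j + K div 2)"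
  shows "rate K M tau beta p j + rate K M tau beta p (j + K div 2)
    < rate K M tau beta (merge_edge_power K p) j
      + rate K M tau beta (merge_edge_power K p) (j + K div 2)"
  unfolding pair_rate_merge_eq[OF assms(1)] pair_rate_eq[OF assms(1), of p]
  using log_merge_less[of 2, OF _ partner_gain_bounds[OF assms(1)] assms(2,3)] tau_pos by simp

lemma feasible_nonneg_partners:
  assumes "feasible K pmax p" and "j \<in> center_users K"
  shows "0 \<le> p j" and "0 \<le> p (j + K div 2)"
  using assms K_eq_double_half by (auto simp: feasible_def center_users_def)

lemma feasible_merge_edge_power:
  assumes "feasible K pmax p"
  shows "feasible K pmax (merge_edge_power K p)"
proof -
  have "(\<Sum>k=1..K. merge_edge_power K p k) = (\<Sum>k=1..K. p k)"
    by (subst (1 2) K_eq_double_half, unfold sum_double_interval_pairs)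
      (intro sum.cong refl, simp add: merge_edge_power_def center_users_def)
  moreover have "0 \<le> merge_edge_power K p k" for k
    using feasible_nonneg_partners[OF assms] by (simp add: merge_edge_power_def)
  ultimately show ?thesis
    using assms by (simp add: feasible_def)
qed

lemma sum_rate_merge_less:
  assumes "feasible K pmax p" and "k \<in> edge_users K" and "p k \<noteq> 0"
  shows "sum_rate K M tau beta p < sum_rate K M tau beta (merge_edge_power K p)"
proof -
  obtain j where j: "j \<in> center_users K" and k: "k = j + K div 2"
    using assms(2) edge_users_eq by blast
  have "0 < p (j + K div 2)"
    using assms(3) feasible_nonneg_partners[OF assms(1) j] k by simp
  then have "\<exists>i\<in>center_users K. rate K M tau beta p i + rate K M tau beta p (i + K div 2)
    < rate K M tau beta (merge_edge_power K p) i
      + rate K M tau beta (merge_edge_power K p) (i + K div 2)"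
    using j feasible_nonneg_partners(1)[OF assms(1) j] pair_rate_merge_less by blast
  then show ?thesis
    unfolding sum_rate_pairs
    by (intro sum_strict_mono_ex1 ballI pair_rate_merge_le feasible_nonneg_partners[OF assms(1)])
      (simp_all add: center_users_def)
qed

lemma maximizer_edge_power_zero:
  assumes "is_maximizer K M tau pmax beta p" and "k \<in> edge_users K"
  shows "p k = 0"
proof (rule ccontr)
  assume "p k \<noteq> 0"
  have feasible: "feasible K pmax p"
    using assms(1) by (simp add: is_maximizer_def)
  then have "sum_rate K M tau beta p < sum_rate K M tau beta (merge_edge_power K p)"
    using assms(2) \<open>p k \<noteq> 0\<close> by (rule sum_rate_merge_less)
  moreover have "sum_rate K M tau beta (merge_edge_power K p) \<le> sum_rate K M tau beta p"
    using assms(1) feasible_merge_edge_power[OF feasible] by (simp add: is_maximizer_def)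
  ultimately show False
    by simp
qed

lemma maximizer_exists:
  assumes "0 \<le> pmax"
  shows "\<exists>p. is_maximizer K M tau pmax beta p"
proof -
  \<comment> \<open>Powers of indices outside 1..K do not affect the sum rate, so it suffices to
    maximize over the compact set of feasible vectors vanishing there.\<close>
  let ?S = "{p. (\<forall>k\<in>{1..K}. 0 \<le> p k) \<and> (\<forall>k. k \<notin> {1..K} \<longrightarrow> p k = 0)
    \<and> sum p {1..K} \<le> pmax}"
  have "\<exists>p\<in>?S. \<forall>q\<in>?S. sum_rate K M tau beta q \<le> sum_rate K M tau beta p"
  proof (rule continuous_attains_sup[of ?S "sum_rate K M tau beta"])
    show "compact ?S"
      by (rule compact_supported_simplex) simp
    have "(\<lambda>_. 0) \<in> ?S"
      using assms by simp
    then show "?S \<noteq> {}"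
      by (metis empty_iff)
    show "continuous_on ?S (sum_rate K M tau beta)"
      by (rule continuous_on_subset[OF continuous_on_sum_rate]) blast
  qed
  then obtain p where "p \<in> ?S"
    and p_max: "\<forall>q\<in>?S. sum_rate K M tau beta q \<le> sum_rate K M tau beta p"
    by blast
  then have "feasible K pmax p"
    by (simp add: feasible_def)
  moreover have "sum_rate K M tau beta q \<le> sum_rate K M tau beta p" if "feasible K pmax q" for q
  proof -
    let ?q = "\<lambda>k. if k \<in> {1..K} then q k else 0"
    have "?q \<in> ?S"
      using that by (simp add: feasible_def)
    then have "sum_rate K M tau beta ?q \<le> sum_rate K M tau beta p"
      using p_max by blast
    moreover have "sum_rate K M tau beta ?q = sum_rate K M tau beta q"
      by (rule sum_rate_cong) simp
    ultimately show ?thesis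
      by simp
  qed
  ultimately show ?thesis
    unfolding is_maximizer_def by blast
qed

end

theorem lemma1:
  fixes K M :: nat and tau pmax :: real and beta :: "nat \<Rightarrow> real"
  assumes "even K" and "K \<ge> 2" and "M \<ge> K div 2"
    and "tau > 0" and "pmax > 0"
    and "\<forall>k\<in>{1..K}. beta k > 0"
    and "\<forall>j\<in>center_users K. \<forall>i\<in>edge_users K. beta j > beta i"
  shows "(\<forall>p. is_maximizer K M tau pmax beta p \<longrightarrow> (\<forall>k\<in>edge_users K. p k = 0))
       \<and> (\<exists>p. is_maximizer K M tau pmax beta p \<and> (\<forall>k\<in>edge_users K. p k = 0))"
proof -
  interpret noma_downlink K M tau beta
    using assms by unfold_locales
  obtain p where "is_maximizer K M tau pmax beta p"
    using maximizer_exists[OF less_imp_le[OF assms(5)]] by blast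
  then show ?thesis
    using maximizer_edge_power_zero by blast
qed

end
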